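(* For every Borel function $f:\mathbb{R}\to\mathbb{R}$ there is a nonempty perfect set $P\subseteq\mathbb{R}$ such that $f^{-1}[P]$ is both meager and Lebesgue null. *)

theory Defs
  imports "HOL-Analysis.Analysis"
begin

definition perfect_set :: "real set \<Rightarrow> bool" where
  "perfect_set P \<longleftrightarrow> closed P \<and> (\<forall>x\<in>P. x islimpt P)"

definition nowhere_dense :: "real set \<Rightarrow> bool" where
  "nowhere_dense A \<longleftrightarrow> interior (closure A) = {}"

definition meager :: "real set \<Rightarrow> bool" where
  "meager A \<longleftrightarrow> (\<exists>F. countable F \<and> (\<forall>N\<in>F. nowhere_dense N) \<and> A \<subseteq> \<Union>F)"

end

theory Submission
  imports Defs
begin

(* Fixing the even-indexed digits of the middle-thirds Cantor set according to a parameter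
   t (a set of naturals) and leaving the odd-indexed digits free gives continuum many nonempty
   perfect sets cantor_slice t; two different parameters differ in some fixed digit, which keeps
   the corresponding slices at positive distance, so the slices are pairwise disjoint. Their
   preimages under f are pairwise disjoint Borel sets. Both the meager sets and the Lebesgue null
   sets satisfy the countable chain condition on Borel sets: a non-meager Borel set is comeager in
   a nonempty open set, and disjoint such sets give disjoint open sets, of which there are only
   countably many; a sigma-finite measure charges only countably many disjoint sets. Hence all
   but countably many of the preimages are both meager and null. *)

lemma meager_subset: "meager B \<Longrightarrow> A \<subseteq> B \<Longrightarrow> meager A"
  unfolding meager_def by (meson order_trans)

lemma nowhere_dense_imp_meager: "nowhere_dense N \<Longrightarrow> meager N"
  unfolding meager_def by (rule exI[of _ "{N}"]) simp

lemma meager_Union: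
  assumes "countable \<A>" "\<And>A. A \<in> \<A> \<Longrightarrow> meager A"
  shows "meager (\<Union>\<A>)"
proof -
  obtain F where F: "\<And>A. A \<in> \<A> \<Longrightarrow> countable (F A) \<and> (\<forall>N\<in>F A. nowhere_dense N) \<and> A \<subseteq> \<Union>(F A)"
    using assms(2) unfolding meager_def by metis
  show ?thesis
    unfolding meager_def
  proof (intro exI conjI)
    show "countable (\<Union>(F ` \<A>))"
      using assms(1) F by simp
    show "\<forall>N\<in>\<Union>(F ` \<A>). nowhere_dense N"
      using F by simp
    show "\<Union>\<A> \<subseteq> \<Union>(\<Union>(F ` \<A>))"
    proof
      fix x assume "x \<in> \<Union>\<A>"
      then obtain A where "A \<in> \<A>" "x \<in> A"
        by blast
      then show "x \<in> \<Union>(\<Union>(F ` \<A>))"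
        using F[of A] by blast
    qed
  qed
qed

lemma meager_empty: "meager {}"
  using meager_Union[of "{}"] by simp

lemma meager_Un: "meager A \<Longrightarrow> meager B \<Longrightarrow> meager (A \<union> B)"
  using meager_Union[of "{A, B}"] by auto

lemma nowhere_dense_frontier:
  assumes "open U"
  shows "nowhere_dense (frontier U)"
proof -
  have "interior (frontier U) \<inter> U = {}"
    using assms interior_subset by (fastforce simp: frontier_def interior_open)
  then have "interior (frontier U) \<inter> closure U = {}"
    by (simp add: open_Int_closure_eq_empty)
  then have "interior (frontier U) = {}"
    using interior_subset[of "frontier U"] by (auto simp: frontier_def)
  then show ?thesis
    by (simp add: nowhere_dense_def)
qed

lemma open_not_meager:
  assumes "open U" "U \<noteq> {}"
  shows "\<not> meager U"
proof
  assume "meager U"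
  then obtain F where F: "countable F" "\<And>N. N \<in> F \<Longrightarrow> nowhere_dense N" "U \<subseteq> \<Union>F"
    unfolding meager_def by blast
  have "interior (\<Union>(closure ` F)) = {}"
    using Baire_category_alt[of euclidean "closure ` F"] F(1,2)
    by (auto simp: completely_metrizable_space_euclidean nowhere_dense_def)
  moreover have "U \<subseteq> interior (\<Union>(closure ` F))"
    using assms(1) F(3) closure_subset by (intro interior_maximal) blast+
  ultimately show False
    using assms(2) by blast
qed

definition baire_property :: "real set \<Rightarrow> bool" where
  "baire_property E \<longleftrightarrow> (\<exists>U. open U \<and> meager (sym_diff E U))"

lemma baire_property_borel:
  assumes "E \<in> sets borel"
  shows "baire_property E"
proof -
  have "E \<in> sigma_sets UNIV {S. open S}"
    using assms sets_borel by blast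
  then show ?thesis
  proof (induction rule: sigma_sets.induct)
    case (Basic a)
    then show ?case
      unfolding baire_property_def by (intro exI[of _ a]) (simp add: meager_empty)
  next
    case Empty
    then show ?case
      unfolding baire_property_def by (intro exI[of _ "{}"]) (simp add: meager_empty)
  next
    case (Compl a)
    then obtain U where U: "open U" "meager (sym_diff a U)"
      unfolding baire_property_def by blast
    have "sym_diff (UNIV - a) (- closure U) \<subseteq> sym_diff a U \<union> frontier U"
      using closure_subset[of U] U(1) by (auto simp: frontier_def interior_open)
    moreover have "meager (sym_diff a U \<union> frontier U)"
      by (rule meager_Un[OF U(2) nowhere_dense_imp_meager[OF nowhere_dense_frontier[OF U(1)]]])
    ultimately show ?case
      unfolding baire_property_def by (intro exI[of _ "- closure U"]) (auto intro: meager_subset)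
  next
    case (Union A)
    then obtain U where U: "\<And>i. open (U i)" "\<And>i. meager (sym_diff (A i) (U i))"
      unfolding baire_property_def by metis
    have "sym_diff (\<Union>i. A i) (\<Union>i. U i) \<subseteq> (\<Union>i. sym_diff (A i) (U i))"
      by blast
    moreover have "meager (\<Union>i. sym_diff (A i) (U i))"
      using U(2) by (intro meager_Union) auto
    ultimately show ?case
      unfolding baire_property_def using U(1) by (intro exI[of _ "\<Union>i. U i"]) (auto intro: meager_subset)
  qed
qed

lemma countable_nonmeager_disjoint_family:
  assumes disj: "disjoint_family_on E I" and baire: "\<And>t. t \<in> I \<Longrightarrow> baire_property (E t)"
  shows "countable {t\<in>I. \<not> meager (E t)}"
proof -
  obtain U where U: "\<And>t. t \<in> I \<Longrightarrow> open (U t) \<and> meager (sym_diff (E t) (U t))"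
    using baire unfolding baire_property_def by metis
  let ?J = "{t\<in>I. \<not> meager (E t)}"
  have nonempty: "U t \<noteq> {}" if "t \<in> ?J" for t
    using U[of t] that by auto
  have disjoint: "U s \<inter> U t = {}" if "s \<in> ?J" "t \<in> ?J" "s \<noteq> t" for s t
  proof -
    have "U s \<inter> U t \<subseteq> sym_diff (E s) (U s) \<union> sym_diff (E t) (U t)"
      using disj that unfolding disjoint_family_on_def by blast
    moreover have "meager (sym_diff (E s) (U s) \<union> sym_diff (E t) (U t))"
      by (rule meager_Un) (use U that in auto)
    ultimately have "meager (U s \<inter> U t)"
      by (rule meager_subset[rotated])
    then show ?thesis
      using U that open_not_meager by blast
  qed
  have "countable (U ` ?J)"
    using U disjoint by (intro countable_disjoint_open_subsets) (auto simp: pairwise_def disjnt_def)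
  moreover have "inj_on U ?J"
  proof (rule inj_onI)
    fix s t assume "s \<in> ?J" "t \<in> ?J" "U s = U t"
    then show "s = t"
      using nonempty disjoint by fastforce
  qed
  ultimately show ?thesis
    by (rule countable_image_inj_on)
qed

lemma countable_nonzero_measure_disjoint_family:
  assumes disj: "disjoint_family_on E I" and sets: "\<And>t. t \<in> I \<Longrightarrow> E t \<in> sets M"
    and C: "C \<in> sets M" "emeasure M C < \<infinity>"
  shows "countable {t\<in>I. measure M (E t \<inter> C) \<noteq> 0}"
proof (rule summable_countable_real)
  show "(\<lambda>t. measure M (E t \<inter> C)) summable_on I"
  proof (rule nonneg_bdd_above_summable_on)
    show "bdd_above (sum (\<lambda>t. measure M (E t \<inter> C)) ` {F. F \<subseteq> I \<and> finite F})"
    proof (rule bdd_aboveI2)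
      fix F assume F: "F \<in> {F. F \<subseteq> I \<and> finite F}"
      have fin: "E t \<inter> C \<in> fmeasurable M" if "t \<in> I" for t
        by (rule fmeasurableI2[of C]) (use sets[OF that] C in \<open>auto simp: fmeasurable_def\<close>)
      have "(\<Sum>t\<in>F. measure M (E t \<inter> C)) = measure M (\<Union>t\<in>F. E t \<inter> C)"
        using F fin disj by (intro measure_UNION'[symmetric])
          (auto simp: pairwise_def disjnt_def disjoint_family_on_def)
      also have "\<dots> \<le> measure M C"
        using F fin C by (intro measure_mono_fmeasurable sets.finite_UN) (auto simp: fmeasurable_def)
      finally show "(\<Sum>t\<in>F. measure M (E t \<inter> C)) \<le> measure M C" .
    qed
  qed simp
qed

lemma (in sigma_finite_measure) countable_nonnull_disjoint_family:
  assumes disj: "disjoint_family_on E I" and sets: "\<And>t. t \<in> I \<Longrightarrow> E t \<in> sets M"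
  shows "countable {t\<in>I. E t \<notin> null_sets M}"
proof -
  obtain A where A: "countable A" "A \<subseteq> sets M" "\<Union>A = space M" "\<And>a. a \<in> A \<Longrightarrow> emeasure M a \<noteq> \<infinity>"
    using sigma_finite_countable by blast
  have "{t\<in>I. E t \<notin> null_sets M} \<subseteq> (\<Union>a\<in>A. {t\<in>I. measure M (E t \<inter> a) \<noteq> 0})"
  proof safe
    fix t assume t: "t \<in> I" "E t \<notin> null_sets M"
    have "\<not> (\<forall>a\<in>A. E t \<inter> a \<in> null_sets M)"
    proof
      assume "\<forall>a\<in>A. E t \<inter> a \<in> null_sets M"
      then have "(\<Union>a\<in>A. E t \<inter> a) \<in> null_sets M"
        using A(1) by (intro null_sets_UN') auto
      moreover have "(\<Union>a\<in>A. E t \<inter> a) = E t"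
        using sets.sets_into_space[OF sets[OF t(1)]] A(3) by blast
      ultimately show False
        using t(2) by simp
    qed
    then obtain a where a: "a \<in> A" "E t \<inter> a \<notin> null_sets M"
      by blast
    have "emeasure M (E t \<inter> a) \<le> emeasure M a"
      using a A(2) by (intro emeasure_mono) auto
    then have "emeasure M (E t \<inter> a) \<noteq> \<infinity>"
      using A(4)[OF a(1)] by (metis infinity_ennreal_def neq_top_trans)
    then have "measure M (E t \<inter> a) \<noteq> 0"
      using a A(2) sets[OF t(1)] emeasure_eq_ennreal_measure[of M "E t \<inter> a"] by (auto simp: null_sets_def)
    then show "t \<in> (\<Union>a\<in>A. {t \<in> I. measure M (E t \<inter> a) \<noteq> 0})"
      using a t by blast
  qed
  moreover have "countable (\<Union>a\<in>A. {t\<in>I. measure M (E t \<inter> a) \<noteq> 0})"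
    using A disj sets
    by (intro countable_UN countable_nonzero_measure_disjoint_family) (auto simp: top.not_eq_extremum)
  ultimately show ?thesis
    by (rule countable_subset)
qed

definition cantor_map :: "(nat \<Rightarrow> bool) \<Rightarrow> real" where
  "cantor_map c = (\<Sum>k. (if c k then 2 else 0) / 3 ^ Suc k)"

lemma sums_two_thirds_powers: "(\<lambda>k. 2 / 3 ^ Suc k :: real) sums 1"
proof -
  have eq: "(\<lambda>k. 2 / 3 ^ Suc k :: real) = (\<lambda>k. (2/3) * (1/3) ^ k)"
    by (simp add: fun_eq_iff power_one_over)
  have "(\<lambda>k. (2/3) * (1/3::real) ^ k) sums ((2/3) * (1 / (1 - 1/3)))"
    by (intro sums_mult geometric_sums) simp
  moreover have "(2/3) * (1 / (1 - 1/3)) = (1::real)"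
    by simp
  ultimately show ?thesis
    unfolding eq by (simp only:)
qed

lemma cantor_map_sums: "(\<lambda>k. (if c k then 2 else 0) / 3 ^ Suc k :: real) sums cantor_map c"
proof -
  have "summable (\<lambda>k. 2 / 3 ^ Suc k :: real)"
    using sums_two_thirds_powers by (rule sums_summable)
  then have "summable (\<lambda>k. (if c k then 2 else 0) / 3 ^ Suc k :: real)"
    by (rule summable_comparison_test'[where N = 0]) simp
  then show ?thesis
    unfolding cantor_map_def by (rule summable_sums)
qed

lemma cantor_map_bounds: "0 \<le> cantor_map c" "cantor_map c \<le> 1"
proof -
  show "0 \<le> cantor_map c"
    by (rule sums_le[OF _ sums_zero cantor_map_sums]) simp
  show "cantor_map c \<le> 1"
    by (rule sums_le[OF _ cantor_map_sums sums_two_thirds_powers]) simp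
qed

lemma cantor_map_Suc:
  "cantor_map c = ((if c 0 then 2 else 0) + cantor_map (\<lambda>n. c (Suc n))) / 3"
proof -
  have "(\<lambda>n. (if c (Suc n) then 2 else 0) / 3 ^ Suc (Suc n) :: real) sums (cantor_map (\<lambda>n. c (Suc n)) / 3)"
    using sums_divide[OF cantor_map_sums[of "\<lambda>n. c (Suc n)"], of 3] by (simp add: mult.commute)
  then have "(\<lambda>k. (if c k then 2 else 0) / 3 ^ Suc k :: real) sums
      (cantor_map (\<lambda>n. c (Suc n)) / 3 + (if c 0 then 2 else 0) / 3)"
    by (subst (asm) sums_Suc_iff) simp
  then show ?thesis
    using sums_unique2[OF cantor_map_sums] by (simp add: add_divide_distrib)
qed

lemma cantor_map_first_digit:
  assumes "c 0 \<noteq> c' 0"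
  shows "1 / 3 \<le> \<bar>cantor_map c - cantor_map c'\<bar>"
  using assms cantor_map_Suc[of c] cantor_map_Suc[of c']
    cantor_map_bounds[of "\<lambda>n. c (Suc n)"] cantor_map_bounds[of "\<lambda>n. c' (Suc n)"]
  by (cases "c 0") auto

lemma cantor_map_common_prefix:
  assumes "\<And>k. k < m \<Longrightarrow> c k = c' k"
  shows "cantor_map c - cantor_map c' = (cantor_map (\<lambda>n. c (n + m)) - cantor_map (\<lambda>n. c' (n + m))) / 3 ^ m"
  using assms
proof (induction m)
  case 0
  then show ?case by simp
next
  case (Suc m)
  have "cantor_map c - cantor_map c' = (cantor_map (\<lambda>n. c (n + m)) - cantor_map (\<lambda>n. c' (n + m))) / 3 ^ m"
    using Suc by simp
  also have "cantor_map (\<lambda>n. c (n + m)) - cantor_map (\<lambda>n. c' (n + m))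
      = (cantor_map (\<lambda>n. c (n + Suc m)) - cantor_map (\<lambda>n. c' (n + Suc m))) / 3"
    using cantor_map_Suc[of "\<lambda>n. c (n + m)"] cantor_map_Suc[of "\<lambda>n. c' (n + m)"] Suc.prems[of m]
    by (simp add: diff_divide_distrib)
  finally show ?case
    by simp
qed

lemma cantor_map_dist_le:
  assumes "\<And>k. k < m \<Longrightarrow> c k = c' k"
  shows "\<bar>cantor_map c - cantor_map c'\<bar> \<le> 1 / 3 ^ m"
proof -
  have "\<bar>cantor_map (\<lambda>n. c (n + m)) - cantor_map (\<lambda>n. c' (n + m))\<bar> \<le> 1"
    using cantor_map_bounds[of "\<lambda>n. c (n + m)"] cantor_map_bounds[of "\<lambda>n. c' (n + m)"] by linarith
  then have "\<bar>cantor_map (\<lambda>n. c (n + m)) - cantor_map (\<lambda>n. c' (n + m))\<bar> / 3 ^ m \<le> 1 / 3 ^ m"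
    by (rule divide_right_mono) simp
  then show ?thesis
    using cantor_map_common_prefix[OF assms] by (simp add: abs_divide)
qed

lemma cantor_map_dist_ge:
  assumes "c n \<noteq> c' n"
  shows "1 / 3 ^ Suc n \<le> \<bar>cantor_map c - cantor_map c'\<bar>"
proof -
  define m where "m = (LEAST k. c k \<noteq> c' k)"
  have m: "c m \<noteq> c' m" "m \<le> n"
    unfolding m_def using LeastI[of "\<lambda>k. c k \<noteq> c' k"] Least_le[of "\<lambda>k. c k \<noteq> c' k"] assms by blast+
  have prefix: "c k = c' k" if "k < m" for k
    using not_less_Least[of k "\<lambda>k. c k \<noteq> c' k"] that unfolding m_def by blast
  have "1 / 3 ^ Suc n \<le> (1 / 3) / (3 ^ m :: real)"
    using m(2) by (simp add: frac_le power_increasing)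
  also have "\<dots> \<le> \<bar>cantor_map (\<lambda>k. c (k + m)) - cantor_map (\<lambda>k. c' (k + m))\<bar> / 3 ^ m"
    by (rule divide_right_mono[OF cantor_map_first_digit]) (use m(1) in simp_all)
  also have "\<dots> = \<bar>cantor_map c - cantor_map c'\<bar>"
    using cantor_map_common_prefix[OF prefix] by (simp add: abs_divide)
  finally show ?thesis .
qed

lemma perfect_set_closure:
  assumes "\<And>x. x \<in> S \<Longrightarrow> x islimpt S"
  shows "perfect_set (closure S)"
  unfolding perfect_set_def
proof (intro conjI ballI)
  fix x assume "x \<in> closure S"
  then have "x islimpt S"
    using assms by (auto simp: closure_def)
  then show "x islimpt closure S"
    using closure_subset by (rule islimpt_subset)
qed simp

lemma closures_disjoint_if_separated:
  fixes A B :: "'a::metric_space set"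
  assumes "0 < \<delta>" "\<And>x y. x \<in> A \<Longrightarrow> y \<in> B \<Longrightarrow> \<delta> \<le> dist x y"
  shows "closure A \<inter> closure B = {}"
proof (rule ccontr)
  assume "closure A \<inter> closure B \<noteq> {}"
  then obtain z where "z \<in> closure A" "z \<in> closure B"
    by blast
  then have "setdist A B = 0" "A \<noteq> {}" "B \<noteq> {}"
    using setdist_eq_0I[of z "closure A" "closure B"] by auto
  moreover have "A \<noteq> {} \<Longrightarrow> B \<noteq> {} \<Longrightarrow> \<delta> \<le> setdist A B"
    by (rule le_setdistI) (use assms(2) in auto)
  ultimately show False
    using assms(1) by simp
qed

definition interleave :: "(nat \<Rightarrow> bool) \<Rightarrow> (nat \<Rightarrow> bool) \<Rightarrow> nat \<Rightarrow> bool" where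
  "interleave c d k = (if even k then c (k div 2) else d (k div 2))"

lemma interleave_even [simp]: "interleave c d (2 * n) = c n"
  by (simp add: interleave_def)

lemma interleave_odd [simp]: "interleave c d (Suc (2 * n)) = d n"
  by (simp add: interleave_def)

definition cantor_slice :: "nat set \<Rightarrow> real set" where
  "cantor_slice t = closure (range (\<lambda>d. cantor_map (interleave (\<lambda>n. n \<in> t) d)))"

lemma cantor_slice_nonempty: "cantor_slice t \<noteq> {}"
  unfolding cantor_slice_def by simp

lemma cantor_slice_perfect: "perfect_set (cantor_slice t)"
  unfolding cantor_slice_def
proof (rule perfect_set_closure)
  let ?c = "interleave (\<lambda>n. n \<in> t)"
  fix x assume "x \<in> range (\<lambda>d. cantor_map (?c d))"
  then obtain d where x: "x = cantor_map (?c d)"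
    by blast
  show "x islimpt range (\<lambda>d. cantor_map (?c d))"
    unfolding islimpt_approachable
  proof (intro allI impI)
    fix e :: real assume "0 < e"
    then obtain N where N: "(1/3::real) ^ N < e"
      using real_arch_pow_inv[of e "1/3"] by auto
    define d' where "d' = d(N := \<not> d N)"
    have "?c d' (Suc (2 * N)) \<noteq> ?c d (Suc (2 * N))"
      by (simp add: d'_def)
    then have "1 / 3 ^ Suc (Suc (2 * N)) \<le> \<bar>cantor_map (?c d') - x\<bar>"
      unfolding x by (rule cantor_map_dist_ge)
    then have "0 < \<bar>cantor_map (?c d') - x\<bar>"
      by (rule order.strict_trans2[rotated]) simp
    moreover have "\<bar>cantor_map (?c d') - x\<bar> \<le> 1 / 3 ^ N"
      unfolding x by (rule cantor_map_dist_le) (auto simp: d'_def interleave_def)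
    ultimately show "\<exists>x'\<in>range (\<lambda>d. cantor_map (?c d)). x' \<noteq> x \<and> dist x' x < e"
      using N by (intro bexI[of _ "cantor_map (?c d')"]) (auto simp: dist_real_def power_one_over)
  qed
qed

lemma cantor_slices_disjoint:
  assumes "s \<noteq> t"
  shows "cantor_slice s \<inter> cantor_slice t = {}"
proof -
  obtain n where n: "(n \<in> s) \<noteq> (n \<in> t)"
    using assms by blast
  show ?thesis
    unfolding cantor_slice_def
  proof (rule closures_disjoint_if_separated)
    show "(0::real) < 1 / 3 ^ Suc (2 * n)"
      by simp
    fix x y
    assume "x \<in> range (\<lambda>d. cantor_map (interleave (\<lambda>n. n \<in> s) d))"
      and "y \<in> range (\<lambda>d. cantor_map (interleave (\<lambda>n. n \<in> t) d))"
    then obtain d d' where xy: "x = cantor_map (interleave (\<lambda>n. n \<in> s) d)"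
      "y = cantor_map (interleave (\<lambda>n. n \<in> t) d')"
      by blast
    have "interleave (\<lambda>n. n \<in> s) d (2 * n) \<noteq> interleave (\<lambda>n. n \<in> t) d' (2 * n)"
      using n by simp
    then show "1 / 3 ^ Suc (2 * n) \<le> dist x y"
      unfolding xy dist_real_def by (rule cantor_map_dist_ge)
  qed
qed

lemma uncountable_UNIV_nat_set: "uncountable (UNIV :: nat set set)"
  using Cantors_theorem[of "UNIV :: nat set"] by (auto simp: uncountable_def)

theorem mainTheorem16:
  fixes f :: "real \<Rightarrow> real"
  assumes "f \<in> borel_measurable borel"
  shows "\<exists>P. P \<noteq> {} \<and> perfect_set P \<and> meager (f -` P) \<and> f -` P \<in> null_sets lebesgue"
proof -
  define E where "E t = f -` cantor_slice t" for t
  have "E t \<in> sets borel" for t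
  proof -
    have "closed (cantor_slice t)"
      using cantor_slice_perfect[of t] by (simp add: perfect_set_def)
    then show ?thesis
      using measurable_sets[OF assms borel_closed] by (simp add: E_def)
  qed
  moreover have "disjoint_family E"
    using cantor_slices_disjoint by (auto simp: E_def disjoint_family_on_def)
  ultimately have "countable ({t. \<not> meager (E t)} \<union> {t. E t \<notin> null_sets lborel})"
    using countable_nonmeager_disjoint_family[of E UNIV] baire_property_borel
      lborel.countable_nonnull_disjoint_family[of E UNIV] by simp
  then have "{t. \<not> meager (E t)} \<union> {t. E t \<notin> null_sets lborel} \<noteq> UNIV"
    using uncountable_UNIV_nat_set by metis
  then obtain t where "meager (E t)" "E t \<in> null_sets lborel"
    by blast
  then show ?thesis
    using cantor_slice_nonempty[of t] cantor_slice_perfect[of t] null_sets_completionI[of "E t" lborel]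
    unfolding E_def by blast
qed

end
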